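(* Let $k\ge 2$, $n\ge1$, and let $L_n$ and the bijection $\varphi:L_n\to E^{n-1}$ be as in the context. If $A\subseteq L_n$ is an intersecting antichain in $E^n$, then $\varphi(A)$ is an intersecting antichain in $E^{n-1}$; and if $B\subseteq E^{n-1}$ is an intersecting antichain, then $\varphi^{-1}(B)$ is an intersecting antichain in $E^n$.
   Context: $E=\{0,\dots,k-1\}$. For $\mathbf a,\mathbf b\in E^m$ write $\mathbf a\preceq\mathbf b$ if $a_i\le b_i$ for all $i$. $A\subseteq E^m$ is an antichain if there are no distinct $\mathbf a,\mathbf b\in A$ with $\mathbf a\preceq\mathbf b$; $A$ is intersecting if for all $\mathbf a,\mathbf b\in A$ (including $\mathbf a=\mathbf b$) there is $i$ with $a_i+b_i\ge k$. For $\mathbf a\in E^n$, $w(\mathbf a)=a_1+\dots+a_n$, and $\mathcal B_t=\{\mathbf a\in E^n: w(\mathbf a)=t\}$. Let $g=\lfloor n(k-1)/2\rfloor$ and $C_i=\{\mathbf a\in E^n: a_1=i\}$. Define $L_n=(\mathcal B_0\cup\dots\cup\mathcal B_g)\cap(C_0\cup C_{k-1})$ if $n(k-1)$ is odd, and $L_n=((\mathcal B_0\cup\dots\cup\mathcal B_{g-1})\cap(C_0\cup C_{k-1}))\cup(\mathcal B_g\cap C_0)$ if $n(k-1)$ is even. For $a\in E$ let $\overline a=k-1-a$. Define $\varphi(a_1,\dots,a_n)=(a_2,\dots,a_n)$ if $a_1=0$ and $\varphi(a_1,\dots,a_n)=(\overline{a}_2,\dots,\overline{a}_n)$ if $a_1=k-1$;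 this map is a bijection $L_n\to E^{n-1}$. *)

theory Defs
  imports Main
begin

text \<open>Vectors in E^m, E = {0..k-1}, are lists of naturals of length m with entries < k.
  The coordinate a_1 is the head of the list.\<close>

definition cube :: "nat \<Rightarrow> nat \<Rightarrow> nat list set" where
  "cube k m = {a. length a = m \<and> (\<forall>x\<in>set a. x < k)}"

definition vle :: "nat list \<Rightarrow> nat list \<Rightarrow> bool" where
  "vle a b \<longleftrightarrow> list_all2 (\<le>) a b"

definition is_antichain :: "nat list set \<Rightarrow> bool" where
  "is_antichain A \<longleftrightarrow> (\<forall>a\<in>A. \<forall>b\<in>A. a \<noteq> b \<longrightarrow> \<not> vle a b)"

definition is_intersecting :: "nat \<Rightarrow> nat list set \<Rightarrow> bool" where
  "is_intersecting k A \<longleftrightarrow> (\<forall>a\<in>A. \<forall>b\<in>A. \<exists>i < length a. a ! i + b ! i \<ge> k)"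

definition weight :: "nat list \<Rightarrow> nat" where
  "weight a = sum_list a"

definition Lset :: "nat \<Rightarrow> nat \<Rightarrow> nat list set" where
  "Lset k n = (let g = n * (k - 1) div 2 in
     if odd (n * (k - 1))
     then {a \<in> cube k n. weight a \<le> g \<and> (hd a = 0 \<or> hd a = k - 1)}
     else {a \<in> cube k n. (weight a < g \<and> (hd a = 0 \<or> hd a = k - 1))
                         \<or> (weight a = g \<and> hd a = 0)})"

definition phi :: "nat \<Rightarrow> nat list \<Rightarrow> nat list" where
  "phi k a = (if hd a = 0 then tl a else map (\<lambda>x. k - 1 - x) (tl a))"

end

theory Submission
  imports Defs
begin

text \<open>Complementation \<open>x \<mapsto> k - 1 - x\<close> turns "\<open>s\<close> does not intersect \<open>t\<close>" into
  "\<open>s \<preceq> \<overline>t\<close>", so on vectors headed by \<open>0\<close> or \<open>k - 1\<close> the map \<open>\<phi>\<close> carries every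
  pair that is intersecting and incomparable to such a pair, and back. The only obstruction
  would be a vector \<open>(k-1, s)\<close> with \<open>\<overline>s \<preceq> t\<close> for another \<open>(y, t)\<close> in \<open>L\<^sub>n\<close>; then
  \<open>w(s) + w(t) \<ge> (n-1)(k-1)\<close>, which contradicts the weight bound defining \<open>L\<^sub>n\<close>.\<close>

definition intersects :: "nat \<Rightarrow> nat list \<Rightarrow> nat list \<Rightarrow> bool" where
  "intersects k a b \<longleftrightarrow> (\<exists>i < length a. k \<le> a ! i + b ! i)"

definition compl_vec :: "nat \<Rightarrow> nat list \<Rightarrow> nat list" where
  "compl_vec k = map (\<lambda>x. k - 1 - x)"

definition compatible :: "nat \<Rightarrow> nat list \<Rightarrow> nat list \<Rightarrow> bool" where
  "compatible k a b \<longleftrightarrow> intersects k a b \<and> (a \<noteq> b \<longrightarrow> \<not> vle a b \<and> \<not> vle b a)"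

lemma intersecting_antichain_iff_compatible:
  "is_intersecting k X \<and> is_antichain X \<longleftrightarrow> (\<forall>a\<in>X. \<forall>b\<in>X. compatible k a b)"
  unfolding is_intersecting_def is_antichain_def compatible_def intersects_def by auto

lemma intersects_Nil [simp]: "\<not> intersects k [] t"
  by (simp add: intersects_def)

lemma intersects_Cons [simp]:
  "intersects k (x # s) (y # t) \<longleftrightarrow> k \<le> x + y \<or> intersects k s t"
  by (auto simp: intersects_def less_Suc_eq_0_disj)

lemma intersects_commute:
  "length a = length b \<Longrightarrow> intersects k a b \<longleftrightarrow> intersects k b a"
  by (auto simp: intersects_def add.commute)

lemma vle_Cons [simp]: "vle (x # s) (y # t) \<longleftrightarrow> x \<le> y \<and> vle s t"
  by (simp add: vle_def)

lemma vle_refl [simp]: "vle s s"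
  by (simp add: vle_def list.rel_refl)

lemma vle_length: "vle s t \<Longrightarrow> length s = length t"
  by (simp add: vle_def list_all2_lengthD)

lemma compatible_commute:
  "length a = length b \<Longrightarrow> compatible k a b \<longleftrightarrow> compatible k b a"
  by (auto simp: compatible_def intersects_commute)

lemma compl_vec_Cons [simp]:
  "compl_vec k [] = []" "compl_vec k (x # t) = (k - 1 - x) # compl_vec k t"
  by (simp_all add: compl_vec_def)

lemma length_compl_vec [simp]: "length (compl_vec k t) = length t"
  by (simp add: compl_vec_def)

lemma compl_vec_cube: "t \<in> cube k m \<Longrightarrow> compl_vec k t \<in> cube k m"
  by (auto simp: cube_def compl_vec_def)

lemma compl_vec_compl_vec: "\<forall>x\<in>set t. x < k \<Longrightarrow> compl_vec k (compl_vec k t) = t"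
  by (induct t) auto

lemma intersects_compl_vec_iff:
  "length s = length t \<Longrightarrow> \<forall>y\<in>set t. y < k \<Longrightarrow>
     intersects k s (compl_vec k t) \<longleftrightarrow> \<not> vle s t"
  by (induct s t rule: list_induct2) auto

lemma vle_compl_vec_iff:
  "length s = length t \<Longrightarrow> \<forall>y\<in>set t. y < k \<Longrightarrow>
     vle s (compl_vec k t) \<longleftrightarrow> \<not> intersects k s t"
  by (induct s t rule: list_induct2) auto

lemma vle_compl_vec_compl_vec_iff:
  "length s = length t \<Longrightarrow> \<forall>x\<in>set s. x < k \<Longrightarrow> \<forall>y\<in>set t. y < k \<Longrightarrow>
     vle (compl_vec k s) (compl_vec k t) \<longleftrightarrow> vle t s"
  by (induct s t rule: list_induct2) auto

lemma weight_add_ge_if_vle_compl_vec: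
  assumes "vle (compl_vec k s) t"
  shows "length s * (k - 1) \<le> weight s + weight t"
proof -
  have "length s = length t"
    using vle_length[OF assms] by simp
  from this assms show ?thesis
    by (induct s t rule: list_induct2) (auto simp: weight_def)
qed

lemma length_phi [simp]: "length (phi k a) = length a - 1"
  by (simp add: phi_def)

lemma phi_Cons_0 [simp]: "phi k (0 # t) = t"
  by (simp add: phi_def)

lemma phi_Cons_top: "2 \<le> k \<Longrightarrow> phi k ((k - 1) # t) = compl_vec k t"
  by (simp add: phi_def compl_vec_def)

lemma Lset_subset_cube: "Lset k n \<subseteq> cube k n"
  by (auto simp: Lset_def Let_def)

lemma Cons_Lset_cube: "x # t \<in> Lset k n \<Longrightarrow> t \<in> cube k (n - 1)"
  using Lset_subset_cube by (fastforce simp: cube_def)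

lemma LsetE:
  assumes "a \<in> Lset k n" and "1 \<le> n"
  obtains t where "a = 0 # t" and "t \<in> cube k (n - 1)"
        | t where "a = (k - 1) # t" and "t \<in> cube k (n - 1)"
  using assms by (cases a) (auto simp: Lset_def Let_def cube_def split: if_splits)

lemma weight_Lset_add_less:
  assumes "a \<in> Lset k n" and "b \<in> Lset k n" and "hd a = k - 1" and "2 \<le> k"
  shows "weight a + weight b < n * (k - 1)"
proof (cases "odd (n * (k - 1))")
  case True
  then have "2 * (n * (k - 1) div 2) < n * (k - 1)"
    by presburger
  moreover have "weight a \<le> n * (k - 1) div 2" "weight b \<le> n * (k - 1) div 2"
    using assms True by (auto simp: Lset_def Let_def)
  ultimately show ?thesis by linarith
next
  case False
  then have "2 * (n * (k - 1) div 2) = n * (k - 1)"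
    by presburger
  moreover have "weight a < n * (k - 1) div 2" "weight b \<le> n * (k - 1) div 2"
    using assms False by (auto simp: Lset_def Let_def)
  ultimately show ?thesis by linarith
qed

lemma Lset_top_not_vle_compl_vec:
  assumes "(k - 1) # s \<in> Lset k n" and "y # t \<in> Lset k n" and "2 \<le> k"
  shows "\<not> vle (compl_vec k s) t"
proof
  assume "vle (compl_vec k s) t"
  then have "(n - 1) * (k - 1) \<le> weight s + weight t"
    using weight_add_ge_if_vle_compl_vec assms(1) Lset_subset_cube
    by (fastforce simp: cube_def)
  moreover have "weight ((k - 1) # s) + weight (y # t) < n * (k - 1)"
    using weight_Lset_add_less[OF assms(1,2)] assms(3) by simp
  moreover have "1 \<le> n"
    using assms(1) Lset_subset_cube by (fastforce simp: cube_def)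
  ultimately show False
    by (cases n) (auto simp: weight_def)
qed

lemma compatible_phi_iff_mixed:
  assumes a: "0 # s \<in> Lset k n" and b: "(k - 1) # t \<in> Lset k n" and k: "2 \<le> k"
  shows "compatible k (phi k (0 # s)) (phi k ((k - 1) # t))
           \<longleftrightarrow> compatible k (0 # s) ((k - 1) # t)"
proof -
  have len: "length s = length t" and t_lt: "\<forall>y\<in>set t. y < k"
    using Cons_Lset_cube[OF a] Cons_Lset_cube[OF b] by (simp_all add: cube_def)
  have "\<not> vle (compl_vec k t) s"
    using Lset_top_not_vle_compl_vec[OF b a k] .
  then have "s \<noteq> compl_vec k t"
    by auto
  with \<open>\<not> vle (compl_vec k t) s\<close> show ?thesis
    unfolding phi_Cons_0 phi_Cons_top[OF k]
    using len t_lt k by (auto simp: compatible_def intersects_compl_vec_iff vle_compl_vec_iff)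
qed

lemma compatible_phi_iff_top:
  assumes a: "(k - 1) # s \<in> Lset k n" and b: "(k - 1) # t \<in> Lset k n" and k: "2 \<le> k"
  shows "compatible k (phi k ((k - 1) # s)) (phi k ((k - 1) # t))
           \<longleftrightarrow> compatible k ((k - 1) # s) ((k - 1) # t)"
proof -
  have len: "length s = length t" and s_lt: "\<forall>x\<in>set s. x < k" and t_lt: "\<forall>y\<in>set t. y < k"
    using Cons_Lset_cube[OF a] Cons_Lset_cube[OF b] by (simp_all add: cube_def)
  have "intersects k (compl_vec k s) (compl_vec k t)"
    using Lset_top_not_vle_compl_vec[OF a b k] intersects_compl_vec_iff[of "compl_vec k s" t k]
      len t_lt by simp
  moreover have "compl_vec k s = compl_vec k t \<longleftrightarrow> s = t"
    using compl_vec_compl_vec s_lt t_lt by metis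
  moreover have "k \<le> (k - 1) + (k - 1)"
    using k by simp
  ultimately show ?thesis
    unfolding phi_Cons_top[OF k]
    using len s_lt t_lt by (auto simp: compatible_def vle_compl_vec_compl_vec_iff)
qed

lemma compatible_phi_iff:
  assumes k: "2 \<le> k" and n: "1 \<le> n" and a: "a \<in> Lset k n" and b: "b \<in> Lset k n"
  shows "compatible k (phi k a) (phi k b) \<longleftrightarrow> compatible k a b"
proof -
  have "length a = n" "length b = n"
    using a b Lset_subset_cube unfolding cube_def by blast+
  then have len: "length a = length b" "length (phi k a) = length (phi k b)"
    by simp_all
  from a n show ?thesis
  proof (cases rule: LsetE)
    case a0: (1 s)
    from b n show ?thesis
    proof (cases rule: LsetE)
      case (1 t)
      then show ?thesis
        using a0 k by (simp add: compatible_def)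
    next
      case (2 t)
      then show ?thesis
        using a0 a b k compatible_phi_iff_mixed by simp
    qed
  next
    case a1: (2 s)
    from b n show ?thesis
    proof (cases rule: LsetE)
      case (1 t)
      then have "compatible k (phi k b) (phi k a) \<longleftrightarrow> compatible k b a"
        using a1 a b k compatible_phi_iff_mixed by simp
      then show ?thesis
        using compatible_commute len by simp
    next
      case (2 t)
      then show ?thesis
        using a1 a b k compatible_phi_iff_top by simp
    qed
  qed
qed

lemma phi_Lset_cube:
  assumes "2 \<le> k" and "1 \<le> n" and "a \<in> Lset k n"
  shows "phi k a \<in> cube k (n - 1)"
  using assms(3,2)
proof (cases rule: LsetE)
  case (1 t)
  then show ?thesis by simp
next
  case (2 t)
  then have "phi k a = compl_vec k t"
    using phi_Cons_top[OF assms(1)] by simp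
  with compl_vec_cube[OF \<open>t \<in> cube k (n - 1)\<close>] show ?thesis
    by simp
qed

lemma all_compatible_phi_image_iff:
  assumes "2 \<le> k" and "1 \<le> n" and "A \<subseteq> Lset k n"
  shows "(\<forall>u\<in>phi k ` A. \<forall>v\<in>phi k ` A. compatible k u v)
           \<longleftrightarrow> (\<forall>a\<in>A. \<forall>b\<in>A. compatible k a b)"
proof -
  have "compatible k (phi k a) (phi k b) \<longleftrightarrow> compatible k a b" if "a \<in> A" and "b \<in> A" for a b
    using compatible_phi_iff[OF assms(1,2)] assms(3) that by blast
  then show ?thesis
    by simp
qed

theorem lemma4:
  fixes k n :: nat
  assumes "k \<ge> 2" and "n \<ge> 1"
  shows "(\<forall>A. A \<subseteq> Lset k n \<and> is_intersecting k A \<and> is_antichain A \<longrightarrow>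
            phi k ` A \<subseteq> cube k (n - 1) \<and> is_intersecting k (phi k ` A) \<and> is_antichain (phi k ` A))
       \<and> (\<forall>B. B \<subseteq> cube k (n - 1) \<and> is_intersecting k B \<and> is_antichain B \<longrightarrow>
            (let A = {a \<in> Lset k n. phi k a \<in> B} in
              A \<subseteq> cube k n \<and> is_intersecting k A \<and> is_antichain A))"
  unfolding intersecting_antichain_iff_compatible Let_def
proof (intro conjI allI impI; elim conjE)
  fix A
  assume "A \<subseteq> Lset k n" and "\<forall>a\<in>A. \<forall>b\<in>A. compatible k a b"
  then show "phi k ` A \<subseteq> cube k (n - 1)" and "\<forall>u\<in>phi k ` A. \<forall>v\<in>phi k ` A. compatible k u v"
    using phi_Lset_cube[OF assms] all_compatible_phi_image_iff[OF assms] by blast+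
next
  fix B
  assume "\<forall>u\<in>B. \<forall>v\<in>B. compatible k u v"
  moreover have "phi k ` {a \<in> Lset k n. phi k a \<in> B} \<subseteq> B"
    by blast
  ultimately show "\<forall>a\<in>{a \<in> Lset k n. phi k a \<in> B}. \<forall>b\<in>{a \<in> Lset k n. phi k a \<in> B}. compatible k a b"
    using all_compatible_phi_image_iff[OF assms, of "{a \<in> Lset k n. phi k a \<in> B}"] by blast
  show "{a \<in> Lset k n. phi k a \<in> B} \<subseteq> cube k n"
    using Lset_subset_cube by blast
qed

end
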